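(* Let $p,q$ be odd primes with $q-p=2$, and let $D=D_1\cdots D_n$ with $D_1,\dots,D_n$ distinct primes, $2\nmid D$, $p\nmid D$, $q\nmid D$. Let $E=E_-: y^2=x(x-pD)(x-qD)$ with the $2$-isogeny $\varphi:E\to E'$, $E': y^2=x^3+2(p+q)Dx^2+4D^2x$. For each $i$ put $\Pi_i^{-}(D)=\big(1-(\frac{p}{D_i})\big)+\big(1-(\frac{q}{D_i})\big)+\sum_{j=1,j\ne i}^n\big(1-(\frac{D_j}{D_i})\big)$ and $\rho^{-}(D)=\sum_{i=1}^n\Big[\frac{1}{1+\Pi_i^{-}(D)}\Big]$. Then: (1) There exists a subset $T\subset\{D_1,\dots,D_n\}$ with $\#T=\rho^{-}(D)$ such that $S^{(\varphi)}(E/\mathbb{Q})\supset\langle\{D_i^\star: D_i\in T\}\bmod\mathbb{Q}^{\star2}\rangle\cong(\mathbb{Z}/2\mathbb{Z})^{\rho^-(D)}$, where each $D_i^\star\in\{D_i,-D_i\}$. In particular $\dim_2S^{(\varphi)}(E/\mathbb{Q})\ge\rho^{-}(D)$. (2) If furthermore either (a) $p\equiv 7\pmod 8$ and $D_i\equiv 1,7\pmod 8$ for $1\le i\le n$, or (b) $p\equiv1\pmod 8$ and $D_i\equiv1,3\pmod 8$ for $1\le i\le n$, then for $T$ as in (1), $S^{(\varphi)}(E/\mathbb{Q})\supset\langle 2^\star\rangle\times\langle\{D_i^\star:D_i\in T\}\rangle\cong(\mathbb{Z}/2\mathbb{Z})^{\rho^-(D)+1}$ with $2^\star\in\{2,-2\}$.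 In particular $\dim_2S^{(\varphi)}(E/\mathbb{Q})\ge\rho^{-}(D)+1$.
   Context: $(\frac{\cdot}{\cdot})$ is the Legendre symbol and $[x]$ the greatest integer $\le x$. $\varphi(x,y)=(y^2/x^2,\ y(pqD^2-x^2)/x^2)$. The $\varphi$-Selmer group is viewed in $\mathbb{Q}^\star/\mathbb{Q}^{\star2}$: with $S=\{\infty,2,p,q,D_1,\dots,D_n\}$ and $\mathbb{Q}(S,2)=\langle -1,2,p,q,D_1,\dots,D_n\rangle$, it is the set of $d\in\mathbb{Q}(S,2)$ (squarefree integer representatives) such that $C_d: dw^2=d^2+2(p+q)Ddz^2+4D^2z^4$ has a $\mathbb{Q}_v$-point for every $v\in S$. *)

theory Defs
  imports Complex_Main "HOL-Number_Theory.Number_Theory" "HOL-Computational_Algebra.Squarefree"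
begin

text \<open>An l-adic integer is represented as a compatible sequence of integers:
  x k is a representative of its residue modulo l^k, and x (Suc k) = x k (mod l^k).\<close>
definition padic_int :: "int \<Rightarrow> (nat \<Rightarrow> int) \<Rightarrow> bool" where
  "padic_int l x \<longleftrightarrow> (\<forall>k. [x (Suc k) = x k] (mod l ^ k))"

definition padic_nonzero :: "int \<Rightarrow> (nat \<Rightarrow> int) \<Rightarrow> bool" where
  "padic_nonzero l x \<longleftrightarrow> (\<exists>k. \<not> (l ^ k dvd x k))"

text \<open>The quartic C_d : d w^2 = d^2 + 2(p+q) D d z^2 + 4 D^2 z^4.\<close>
definition Cd_rhs :: "int \<Rightarrow> int \<Rightarrow> int \<Rightarrow> int \<Rightarrow> 'a::comm_ring_1 \<Rightarrow> 'a \<Rightarrow> 'a" where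
  "Cd_rhs p q D d u z =
     of_int (d^2) * u^4 + of_int (2*(p+q)*D*d) * u^2 * z^2 + of_int (4*D^2) * z^4"

definition Cd_real_point :: "int \<Rightarrow> int \<Rightarrow> int \<Rightarrow> int \<Rightarrow> bool" where
  "Cd_real_point p q D d \<longleftrightarrow>
     (\<exists>w z::real. of_int d * w^2 = Cd_rhs p q D d 1 z)"

text \<open>C_d has a Q_l-point: writing z = Z/U, w = W/U^2 with l-adic integers U \<noteq> 0, Z, W
  (every element of Q_l is a quotient of l-adic integers), this is the existence of
  l-adic integers U \<noteq> 0, Z, W with d W^2 = d^2 U^4 + 2(p+q)Dd U^2 Z^2 + 4D^2 Z^4.\<close>
definition Cd_padic_point :: "int \<Rightarrow> int \<Rightarrow> int \<Rightarrow> int \<Rightarrow> int \<Rightarrow> bool" where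
  "Cd_padic_point l p q D d \<longleftrightarrow>
     (\<exists>U Z W. padic_int l U \<and> padic_int l Z \<and> padic_int l W \<and> padic_nonzero l U \<and>
        (\<forall>k. [d * (W k)^2 = Cd_rhs p q D d (U k) (Z k)] (mod l ^ k)))"

text \<open>phi-Selmer group, as a set of squarefree integer representatives in Q(S,2),
  where S = {infinity, 2, p, q, D_1, ..., D_n} and Ds = {D_1,...,D_n}.\<close>
definition phi_selmer :: "int \<Rightarrow> int \<Rightarrow> int set \<Rightarrow> int set" where
  "phi_selmer p q Ds =
     {d::int. d \<noteq> 0 \<and> squarefree d \<and>
        (\<forall>l. prime l \<and> l dvd d \<longrightarrow> l \<in> {2, p, q} \<union> Ds) \<and>
        Cd_real_point p q (\<Prod>Ds) d \<and>
        (\<forall>l \<in> {2, p, q} \<union> Ds. Cd_padic_point l p q (\<Prod>Ds) d)}"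

definition Pi_minus :: "int \<Rightarrow> int \<Rightarrow> int set \<Rightarrow> int \<Rightarrow> int" where
  "Pi_minus p q Ds Di =
     (1 - Legendre p Di) + (1 - Legendre q Di) + (\<Sum>Dj \<in> Ds - {Di}. (1 - Legendre Dj Di))"

definition rho_minus :: "int \<Rightarrow> int \<Rightarrow> int set \<Rightarrow> int" where
  "rho_minus p q Ds = (\<Sum>Di \<in> Ds. \<lfloor>1 / (1 + real_of_int (Pi_minus p q Ds Di))\<rfloor>)"

end

theory Submission
  imports Defs
begin

text \<open>Each twist d = t \<cdot> \<Prod>_{D_i \<in> A} D_i^\<star>, with t \<in> {1, \<plusminus>2} and A a set of D_i with
  \<Pi>_i^-(D) = 0, has local points everywhere, obtained by Hensel lifting a simple root modulo l.
  C_d always has a real point. At an odd l not dividing d, (u, z) = (1, 0) lifts once d is a square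
  mod l. At an odd l = D_i dividing d, write d = l d_1 and D = l D_1: the quartic
  4D_1^2 z^4 + 2(p+q)D_1 d_1 z^2 + d_1^2 is a quadratic in (2D_1 z)^2 of discriminant
  4D_1^2 d_1^2 ((p+q)^2 - 4) = 16 D_1^2 d_1^2 pq, because q - p = 2; so it has a simple root mod l
  once p, q and -d_1 D_1 are squares mod l. Since D_i^\<star> \<equiv> 1 mod 4, quadratic reciprocity turns
  \<Pi>_i^-(D) = 0 into exactly these residue conditions. At 2 a congruence mod 8 suffices, and under
  (a) or (b) the supplementary laws make 2, resp. -2, a square modulo p, q and every D_j. Distinct A
  give distinct twists, and the twists by \<plusminus>2 are even while the others are odd.\<close>

lemma hensel_lifting:
  fixes f f' :: "int \<Rightarrow> int" and l a :: int
  assumes l: "prime l"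
    and taylor: "\<And>x h. \<exists>g. f (x + h) = f x + h * f' x + h^2 * g"
    and derivative_diff: "\<And>x h. h dvd (f' (x + h) - f' x)"
    and root: "l dvd f a" and simple: "\<not> l dvd f' a"
  shows "\<exists>X. padic_int l X \<and> (\<forall>k. l^k dvd f (X k)) \<and> (\<forall>k. [X k = a] (mod l))"
proof -
  define P where "P n x \<longleftrightarrow> l^(Suc n) dvd f x \<and> [x = a] (mod l)" for n x
  define Q where "Q n x y \<longleftrightarrow> [y = x] (mod l^(Suc n))" for n x y
  have start: "\<exists>x. P 0 x" using root unfolding P_def by auto
  have step: "\<exists>y. P (Suc n) y \<and> Q n x y" if "P n x" for x n
  proof -
    from that obtain m where m: "f x = l^(Suc n) * m" and xa: "[x = a] (mod l)"
      unfolding P_def by auto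
    have "l dvd f' x - f' a"
    proof -
      have "(x - a) dvd f' (a + (x - a)) - f' a" by (rule derivative_diff)
      moreover have "l dvd x - a" using xa by (simp add: cong_iff_dvd_diff)
      ultimately show ?thesis by (metis add.commute diff_add_cancel dvd_trans)
    qed
    hence "\<not> l dvd f' x" using simple by (metis dvd_add_right_iff diff_add_cancel)
    hence "coprime (f' x) l" using l by (simp add: prime_imp_coprime coprime_commute)
    then obtain v where v: "[f' x * v = 1] (mod l)" using cong_solve_coprime_int by blast
    define t where "t = - m * v"
    define y where "y = x + l^(Suc n) * t"
    obtain g where g: "f y = f x + (l^(Suc n) * t) * f' x + (l^(Suc n) * t)^2 * g"
      using taylor unfolding y_def by blast
    have "l dvd m + t * f' x"
    proof -
      have "[m * (f' x * v) = m * 1] (mod l)" using v by (rule cong_scalar_left)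
      hence "l dvd m * (f' x * v) - m" by (simp add: cong_iff_dvd_diff)
      moreover have "m + t * f' x = - (m * (f' x * v) - m)" unfolding t_def by (simp add: algebra_simps)
      ultimately show ?thesis by (metis dvd_minus_iff)
    qed
    then obtain w where w: "m + t * f' x = l * w" by blast
    have "f y = l^(Suc (Suc n)) * (w + l^n * t^2 * g)"
      using g m w by (simp add: algebra_simps power2_eq_square)
        (metis (no_types, lifting) distrib_left mult.assoc mult.commute)
    moreover have "[y = x] (mod l^(Suc n))" unfolding y_def by (simp add: cong_iff_dvd_diff)
    moreover have "[y = a] (mod l)"
    proof -
      have "[y = x] (mod l)" unfolding y_def by (simp add: cong_iff_dvd_diff)
      thus ?thesis using xa by (rule cong_trans)
    qed
    ultimately show ?thesis unfolding P_def Q_def by (intro exI[of _ y]) simp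
  qed
  obtain X where X: "\<forall>n. P n (X n) \<and> Q n (X n) (X (Suc n))"
    using dependent_nat_choice[of P Q, OF start step] by blast
  have "padic_int l X" unfolding padic_int_def
  proof
    fix k
    have "[X (Suc k) = X k] (mod l^(Suc k))" using X unfolding Q_def by blast
    moreover have "l^k dvd l^(Suc k)" by (simp add: le_imp_power_dvd)
    ultimately show "[X (Suc k) = X k] (mod l^k)" by (rule cong_dvd_modulus)
  qed
  moreover have "l^k dvd f (X k)" for k
    using X dvd_trans le_imp_power_dvd unfolding P_def by (metis le_SucI order_refl)
  ultimately show ?thesis using X unfolding P_def by blast
qed

lemma hensel_lifting_quadratic:
  fixes l \<alpha> \<beta> \<gamma> x0 :: int
  assumes "prime l" and "l dvd \<alpha> * x0^2 + \<beta> * x0 + \<gamma>" and "\<not> l dvd 2 * \<alpha> * x0 + \<beta>"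
  shows "\<exists>X. padic_int l X \<and> (\<forall>k. l^k dvd \<alpha> * (X k)^2 + \<beta> * X k + \<gamma>)"
proof -
  let ?f = "\<lambda>w. \<alpha> * w^2 + \<beta> * w + \<gamma>" and ?f' = "\<lambda>w. 2 * \<alpha> * w + \<beta>"
  have taylor: "\<exists>g. ?f (x + h) = ?f x + h * ?f' x + h^2 * g" for x h
    by (rule exI[of _ \<alpha>]) (simp add: algebra_simps power2_eq_square)
  have derivative_diff: "h dvd ?f' (x + h) - ?f' x" for x h
    by (simp add: algebra_simps)
  from hensel_lifting[of l ?f ?f', OF assms(1) taylor derivative_diff assms(2,3)] show ?thesis
    by blast
qed

lemma hensel_lifting_biquadratic:
  fixes l \<alpha> \<beta> \<gamma> x0 :: int
  assumes "prime l" and "l dvd \<alpha> * x0^4 + \<beta> * x0^2 + \<gamma>" and "\<not> l dvd 4 * \<alpha> * x0^3 + 2 * \<beta> * x0"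
  shows "\<exists>X. padic_int l X \<and> (\<forall>k. l^k dvd \<alpha> * (X k)^4 + \<beta> * (X k)^2 + \<gamma>)"
proof -
  let ?f = "\<lambda>w. \<alpha> * w^4 + \<beta> * w^2 + \<gamma>" and ?f' = "\<lambda>w. 4 * \<alpha> * w^3 + 2 * \<beta> * w"
  have taylor: "\<exists>g. ?f (x + h) = ?f x + h * ?f' x + h^2 * g" for x h
    by (rule exI[of _ "\<alpha> * (6*x^2 + 4*x*h + h^2) + \<beta>"])
      (simp add: algebra_simps power2_eq_square power3_eq_cube power4_eq_xxxx)
  have derivative_diff: "h dvd ?f' (x + h) - ?f' x" for x h
  proof -
    have "?f' (x + h) - ?f' x = h * (4 * \<alpha> * (3*x^2 + 3*x*h + h^2) + 2 * \<beta>)"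
      by (simp add: algebra_simps power2_eq_square power3_eq_cube)
    thus ?thesis by simp
  qed
  from hensel_lifting[of l ?f ?f', OF assms(1) taylor derivative_diff assms(2,3)] show ?thesis
    by blast
qed

lemma padic_int_const: "padic_int l (\<lambda>_. c)"
  unfolding padic_int_def by simp

lemma padic_nonzero_const:
  assumes "prime l" "\<not> l dvd c"
  shows "padic_nonzero l (\<lambda>_. c)"
  unfolding padic_nonzero_def using assms by (intro exI[of _ 1]) simp

lemma Cd_rhs_int: "Cd_rhs p q D d (u::int) z = d^2 * u^4 + 2*(p+q)*D*d * u^2 * z^2 + 4*D^2 * z^4"
  unfolding Cd_rhs_def by simp

lemma Cd_padic_point_of_square:
  fixes l p q D d w0 :: int
  assumes l: "prime l" "\<not> l dvd 2" and "\<not> l dvd d" and w0: "[w0^2 = d] (mod l)"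
  shows "Cd_padic_point l p q D d"
proof -
  have "l dvd d * w0^2 + 0 * w0 + (-(d^2))"
  proof -
    have "[d * w0^2 = d * d] (mod l)" using w0 by (rule cong_scalar_left)
    thus ?thesis by (simp add: cong_iff_dvd_diff power2_eq_square)
  qed
  moreover have "\<not> l dvd 2 * d * w0 + 0"
  proof
    assume "l dvd 2 * d * w0 + 0"
    moreover have "l dvd w0 \<Longrightarrow> l dvd d"
      using w0 by (metis cong_dvd_iff dvd_mult power2_eq_square)
    ultimately show False using assms by (simp add: prime_dvd_mult_iff)
  qed
  ultimately obtain W where W: "padic_int l W" "\<forall>k. l^k dvd d * (W k)^2 + 0 * W k + (-(d^2))"
    using hensel_lifting_quadratic[OF l(1)] by blast
  moreover have "padic_nonzero l (\<lambda>_. 1)"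
    using l(1) not_prime_unit by (intro padic_nonzero_const) auto
  ultimately show ?thesis unfolding Cd_padic_point_def
    by (rule_tac exI[of _ "\<lambda>_. 1"], rule_tac exI[of _ "\<lambda>_. 0"], rule_tac exI[of _ W])
      (simp add: padic_int_const Cd_rhs_int cong_iff_dvd_diff power2_eq_square)
qed

lemma Cd_padic_point_2_of_cong_mod_8:
  fixes p q D d a c v M u z :: int
  assumes "odd a" "[a = c] (mod 8)" "padic_nonzero 2 (\<lambda>_. u)"
    and "d * v^2 = M * a" and "Cd_rhs p q D d u z = M * c"
  shows "Cd_padic_point 2 p q D d"
proof -
  obtain k where k: "c - a = 8 * k" using assms(2) by (metis cong_iff_dvd_diff cong_sym dvdE)
  \<comment> \<open>W = v(1 + 4X) with 2aX^2 + aX = k, i.e. a(1 + 4X)^2 = c\<close>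
  have root: "2 dvd 2*a * k^2 + a * k + (- k)"
  proof -
    have "2*a * k^2 + a * k + (- k) = 2 * (a * k^2) + (a - 1) * k" by (simp add: algebra_simps)
    thus ?thesis using assms(1) by simp
  qed
  have simple: "\<not> 2 dvd 2 * (2*a) * k + a" using assms(1) by simp
  obtain X where X: "padic_int 2 X" "\<forall>j. 2^j dvd 2*a * (X j)^2 + a * X j + (- k)"
    using hensel_lifting_quadratic[OF _ root simple] by auto
  define W where "W j = v * (1 + 4 * X j)" for j
  have "padic_int 2 W"
    unfolding padic_int_def
  proof
    fix j
    have "[X (Suc j) = X j] (mod 2^j)" using X(1) unfolding padic_int_def by blast
    thus "[W (Suc j) = W j] (mod 2^j)" unfolding W_def by (intro cong_mult cong_add cong_refl)
  qed
  moreover have "[d * (W j)^2 = Cd_rhs p q D d u z] (mod 2^j)" for j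
  proof -
    have "d * (W j)^2 = M * a * (1 + 4 * X j)^2"
      unfolding W_def power_mult_distrib using assms(4) by (metis mult.assoc)
    moreover have "Cd_rhs p q D d u z = M * (a + 8 * k)" using assms(5) k by simp
    ultimately have "d * (W j)^2 - Cd_rhs p q D d u z = (8*M) * (2*a * (X j)^2 + a * X j + (- k))"
      by (simp add: algebra_simps power2_eq_square)
    thus ?thesis using X(2) by (simp add: cong_iff_dvd_diff)
  qed
  ultimately show ?thesis unfolding Cd_padic_point_def
    using assms(3) padic_int_const by blast
qed

lemma Cd_padic_point_ramified:
  fixes l p q D1 d1 s r e :: int
  assumes l: "prime l" "\<not> l dvd 2" and "\<not> l dvd D1" and "\<not> l dvd d1"
    and "\<not> l dvd p" and "\<not> l dvd q" and twin: "q = p + 2"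
    and s: "[s^2 = p] (mod l)" and r: "[r^2 = q] (mod l)" and e: "[e^2 = -(d1*D1)] (mod l)"
  shows "Cd_padic_point l p q (l*D1) (l*d1)"
proof -
  have "\<not> l dvd 2*D1" using assms by (simp add: prime_dvd_mult_iff)
  hence "coprime (2*D1) l" using l prime_imp_coprime coprime_commute by blast
  then obtain i where i: "[2*D1*i = 1] (mod l)" using cong_solve_coprime_int by blast
  define m where "m = D1 * d1"
  define Y where "Y = (s + r) * e"
  define z0 where "z0 = Y * i"
  define G where "G z = (4*D1^2) * z^4 + (2*(p+q)*D1*d1) * z^2 + d1^2" for z
  have lm: "\<not> l dvd m" using assms unfolding m_def by (simp add: prime_dvd_mult_iff)
  have l4: "\<not> l dvd 4" using l prime_dvd_mult_iff[of l 2 2] by simp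
  have Y_eq: "[2*D1*z0 = Y] (mod l)"
    using cong_scalar_left[OF i, of Y] unfolding z0_def by (simp add: ac_simps)
  have Y_sq: "[Y^2 = -((s+r)^2 * m)] (mod l)"
    using cong_scalar_left[OF e, of "(s+r)^2"] unfolding Y_def m_def by (simp add: power_mult_distrib ac_simps)
  have sr: "[s^2 - r^2 = p - q] (mod l)" using s r by (rule cong_diff)
  note s' = cong_sym[OF s] and r' = cong_sym[OF r]
  \<comment> \<open>Y^2 is the root -m(s+r)^2 of t^2 + 2(p+q)mt + 4m^2, whose discriminant 16m^2 pq is a square mod l\<close>
  have "[4*D1^2 * G z0 = 0] (mod l)"
  proof -
    define t where "t = -((s+r)^2 * m)"
    have "4*D1^2 * G z0 = ((2*D1*z0)^2)^2 + 2*(p+q)*m*(2*D1*z0)^2 + 4*m^2"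
      unfolding G_def m_def by (simp add: algebra_simps power2_eq_square power4_eq_xxxx)
    moreover have "[((2*D1*z0)^2)^2 + 2*(p+q)*m*(2*D1*z0)^2 + 4*m^2 = (Y^2)^2 + 2*(p+q)*m*Y^2 + 4*m^2] (mod l)"
      by (intro cong_add cong_mult cong_pow cong_refl Y_eq)
    moreover have "[(Y^2)^2 + 2*(p+q)*m*Y^2 + 4*m^2 = t^2 + 2*(s^2+r^2)*m*t + 4*m^2] (mod l)"
      unfolding t_def by (intro cong_add cong_mult cong_pow cong_refl Y_sq s' r')
    moreover have "t^2 + 2*(s^2+r^2)*m*t + 4*m^2 = m^2 * (4 - (s^2 - r^2)^2)"
      unfolding t_def by (simp add: algebra_simps power2_eq_square power4_eq_xxxx)
    moreover have "[m^2 * (4 - (s^2 - r^2)^2) = m^2 * (4 - (p - q)^2)] (mod l)"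
      by (intro cong_mult cong_diff cong_pow cong_refl sr)
    moreover have "m^2 * (4 - (p - q)^2) = 0" using twin by simp
    ultimately show ?thesis by (metis cong_trans)
  qed
  moreover have "\<not> l dvd 4*D1^2"
    using l l4 assms(3) by (simp add: prime_dvd_mult_iff prime_dvd_power_iff)
  ultimately have G0: "l dvd G z0"
    using l by (simp add: cong_0_iff prime_dvd_mult_iff)
  have s_r: "\<not> l dvd s + r"
  proof
    assume "l dvd s + r"
    hence "l dvd s^2 - r^2" by (simp add: power2_eq_square square_diff_square_factored)
    hence "l dvd p - q" using sr by (metis cong_dvd_iff)
    thus False using twin l(2) by simp
  qed
  have "\<not> l dvd e" using e l assms(3,4)
    by (metis cong_dvd_iff dvd_minus_iff dvd_mult power2_eq_square prime_dvd_mult_iff)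
  moreover have "\<not> l dvd i" using i l by (metis cong_dvd_iff dvd_mult not_prime_unit)
  ultimately have z0: "\<not> l dvd z0" using l s_r unfolding z0_def Y_def by (simp add: prime_dvd_mult_iff)
  have K: "\<not> l dvd 4*D1*z0^2 + (p+q)*d1"
  proof
    assume "l dvd 4*D1*z0^2 + (p+q)*d1"
    hence "l dvd D1 * (4*D1*z0^2 + (p+q)*d1)" by simp
    moreover have "D1 * (4*D1*z0^2 + (p+q)*d1) = (2*D1*z0)^2 + (p+q)*m"
      unfolding m_def by (simp add: algebra_simps power2_eq_square)
    moreover have "[(2*D1*z0)^2 + (p+q)*m = Y^2 + (p+q)*m] (mod l)"
      by (intro cong_add cong_mult cong_pow cong_refl Y_eq)
    moreover have "[Y^2 + (p+q)*m = -((s+r)^2 * m) + (s^2+r^2)*m] (mod l)"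
      by (intro cong_add cong_mult cong_pow cong_refl Y_sq s' r')
    moreover have "-((s+r)^2 * m) + (s^2+r^2)*m = -(2*s*r*m)"
      by (simp add: algebra_simps power2_eq_square)
    ultimately have "l dvd 2*s*r*m" by (metis cong_dvd_iff cong_trans dvd_minus_iff)
    moreover have "\<not> l dvd s" using s assms(5) by (metis cong_dvd_iff dvd_mult power2_eq_square)
    moreover have "\<not> l dvd r" using r assms(6) by (metis cong_dvd_iff dvd_mult power2_eq_square)
    ultimately show False using l lm by (simp add: prime_dvd_mult_iff)
  qed
  have G'0: "\<not> l dvd 4 * (4*D1^2) * z0^3 + 2 * (2*(p+q)*D1*d1) * z0"
  proof -
    have "4 * (4*D1^2) * z0^3 + 2 * (2*(p+q)*D1*d1) * z0 = 4 * D1 * z0 * (4*D1*z0^2 + (p+q)*d1)"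
      by (simp add: algebra_simps power2_eq_square power3_eq_cube)
    thus ?thesis using l l4 assms(3) z0 K by (simp add: prime_dvd_mult_iff)
  qed
  obtain Z where Z: "padic_int l Z" "\<forall>k. l^k dvd G (Z k)"
    using hensel_lifting_biquadratic[OF l(1) G0[unfolded G_def] G'0] unfolding G_def by blast
  have "[l*d1 * 0^2 = Cd_rhs p q (l*D1) (l*d1) 1 (Z k)] (mod l^k)" for k
  proof -
    have "Cd_rhs p q (l*D1) (l*d1) 1 (Z k) = l^2 * G (Z k)"
      unfolding G_def by (simp add: Cd_rhs_int algebra_simps power2_eq_square)
    thus ?thesis using Z(2) by (simp add: cong_iff_dvd_diff)
  qed
  moreover have "padic_nonzero l (\<lambda>_. 1)"
    using l(1) not_prime_unit by (intro padic_nonzero_const) auto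
  ultimately show ?thesis unfolding Cd_padic_point_def
    using Z(1) padic_int_const by blast
qed

lemma Cd_real_point:
  fixes p q D d :: int
  assumes "d \<noteq> 0" "D > 0" "p + q > 2"
  shows "Cd_real_point p q D d"
proof (cases "d > 0")
  case True
  show ?thesis unfolding Cd_real_point_def Cd_rhs_def
    using True by (intro exI[of _ "sqrt (real_of_int d)"] exI[of _ 0]) (simp add: power2_eq_square)
next
  case False
  define x where "x = real_of_int d"
  define y where "y = real_of_int D"
  define s where "s = real_of_int (p + q)"
  have x: "x < 0" using False assms(1) unfolding x_def by simp
  have y: "y > 0" and s: "s > 2" using assms(2,3) unfolding y_def s_def by simp_all
  \<comment> \<open>at z^2 = -sx/(4y), the vertex of the quadratic in z^2, the right-hand side is x^2(1 - s^2/4) < 0\<close>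
  define t where "t = - s * x / (4 * y)"
  define R where "R = x^2 - s^2 * x^2 / 4"
  have "s * x < 0" using x s by (simp add: mult_pos_neg)
  hence t: "t \<ge> 0" unfolding t_def using y by (simp add: divide_nonpos_pos)
  have "s^2 > 2^2" using s by (intro power_strict_mono) auto
  hence "R < 0" unfolding R_def using x by (simp add: field_simps)
  hence R: "R / x \<ge> 0" using x by (simp add: divide_nonpos_neg)
  have "x * (sqrt (R / x))^2 = R" using R x by simp
  also have "R = x^2 + 2 * s * y * x * t + 4 * y^2 * t^2"
    unfolding R_def t_def using y by (simp add: field_simps power2_eq_square)
  also have "\<dots> = x^2 * 1^4 + (2 * s * y * x) * 1^2 * (sqrt t)^2 + (4 * y^2) * (sqrt t)^4"
  proof -
    have "(sqrt t)^2 = t" "(sqrt t)^4 = t^2" using t by (simp_all add: power4_eq_xxxx power2_eq_square)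
    thus ?thesis by simp
  qed
  finally have "of_int d * (sqrt (R / x))^2 = Cd_rhs p q D d 1 (sqrt t)"
    unfolding Cd_rhs_def x_def y_def s_def by (simp add: algebra_simps)
  thus ?thesis unfolding Cd_real_point_def by blast
qed

lemma Legendre_range: "Legendre a l \<in> {-1, 0, 1}"
  unfolding Legendre_def by auto

lemma Legendre_le_1: "Legendre a l \<le> 1"
  unfolding Legendre_def by auto

lemma Legendre_eq_1_iff_QuadRes:
  "Legendre a l = 1 \<longleftrightarrow> QuadRes l a \<and> \<not> l dvd a"
  unfolding Legendre_def by (auto simp: cong_0_iff)

lemma Legendre_one: "prime (l::int) \<Longrightarrow> Legendre 1 l = 1"
  unfolding Legendre_def QuadRes_def by (auto simp: cong_iff_dvd_diff intro: exI[of _ 1])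

lemma sign_eq_of_cong:
  fixes l x y :: int
  assumes "l > 2" "x \<in> {-1, 0, 1}" "y \<in> {-1, 0, 1}" "[x = y] (mod l)"
  shows "x = y"
proof -
  have "l dvd x - y" using assms(4) by (simp add: cong_iff_dvd_diff)
  moreover have "\<not> l dvd 1" "\<not> l dvd 2" "\<not> l dvd -1" "\<not> l dvd -2"
    using assms(1) zdvd_imp_le[of l 1] zdvd_imp_le[of l 2] by auto
  ultimately show ?thesis using assms(2,3) by auto
qed

lemma euler_criterion_int:
  fixes l a :: int
  assumes "prime l" "l > 2"
  shows "[Legendre a l = a ^ nat ((l - 1) div 2)] (mod l)"
proof -
  have "prime (nat l)" "2 < nat l" using assms by auto
  from euler_criterion[OF this, of a] assms show ?thesis
    by (simp add: nat_div_distrib nat_diff_distrib)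
qed

lemma Legendre_mult:
  fixes l a b :: int
  assumes "prime l" "l > 2"
  shows "Legendre (a * b) l = Legendre a l * Legendre b l"
proof -
  let ?k = "nat ((l - 1) div 2)"
  have "[Legendre (a * b) l = a ^ ?k * b ^ ?k] (mod l)"
    using euler_criterion_int[OF assms, of "a * b"] by (simp add: power_mult_distrib)
  moreover have "[Legendre a l * Legendre b l = a ^ ?k * b ^ ?k] (mod l)"
    using euler_criterion_int[OF assms] by (intro cong_mult)
  ultimately have "[Legendre (a * b) l = Legendre a l * Legendre b l] (mod l)"
    by (metis cong_sym cong_trans)
  moreover have "Legendre a l * Legendre b l \<in> {-1, 0, 1}"
    using Legendre_range[of a l] Legendre_range[of b l] by auto
  ultimately show ?thesis using sign_eq_of_cong[OF assms(2) Legendre_range] by blast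
qed

lemma Legendre_prod:
  fixes l :: int
  assumes "prime l" "l > 2" "finite A"
  shows "Legendre (\<Prod>x\<in>A. f x) l = (\<Prod>x\<in>A. Legendre (f x) l)"
  using assms(3) by induction (simp_all add: Legendre_one[OF assms(1)] Legendre_mult[OF assms(1,2)])

lemma Legendre_prod_eq_1:
  fixes l :: int
  assumes "prime l" "l > 2" "finite A" "\<And>x. x \<in> A \<Longrightarrow> Legendre (f x) l = 1"
  shows "Legendre (\<Prod>x\<in>A. f x) l = 1"
  using assms by (simp add: Legendre_prod)

lemma Legendre_minus_one:
  fixes l :: int
  assumes "prime l" "l > 2"
  shows "Legendre (-1) l = (-1) ^ nat ((l - 1) div 2)"
proof -
  have "(-1::int) ^ nat ((l - 1) div 2) \<in> {-1, 0, 1}" by (simp add: minus_one_power_iff)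
  thus ?thesis using sign_eq_of_cong[OF assms(2) Legendre_range] euler_criterion_int[OF assms] by blast
qed

lemma Legendre_minus_one_mod_4:
  fixes l :: int
  assumes "prime l" "l > 2"
  shows "Legendre (-1) l = (if l mod 4 = 1 then 1 else -1)"
proof -
  have "odd l" using assms prime_odd_int by blast
  hence "even ((l - 1) div 2) \<longleftrightarrow> l mod 4 = 1" by presburger
  moreover have "(l - 1) div 2 \<ge> 0" using assms by simp
  ultimately show ?thesis
    using Legendre_minus_one[OF assms] by (simp add: minus_one_power_iff even_nat_iff)
qed

lemma (in GAUSS) card_E_two:
  assumes "a = 2"
  shows "card E = nat ((int p - 1) div 2 - (int p - 1) div 2 div 2)"
proof -
  define h where "h = (int p - 1) div 2"
  have "C = (\<lambda>x. x * 2) ` A"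
    unfolding C_def B_def image_image
  proof (rule image_cong[OF refl])
    fix x assume "x \<in> A"
    hence "0 \<le> x * 2" "x * 2 < int p" unfolding A_def using p_eq2 by auto
    thus "x * a mod int p = x * 2" using assms by simp
  qed
  hence "E = (\<lambda>x. x * 2) ` {h div 2<..h}"
    unfolding E_def A_def h_def by auto
  hence "card E = card {h div 2<..h}" by (simp add: card_image inj_on_def)
  thus ?thesis unfolding h_def by simp
qed

lemma Legendre_two:
  fixes l :: int
  assumes "prime l" "l > 2"
  shows "Legendre 2 l = (if l mod 8 \<in> {1, 7} then 1 else -1)"
proof -
  interpret GAUSS "nat l" 2
    using assms by unfold_locales (auto simp: cong_iff_dvd_diff dest: zdvd_imp_le)
  have "odd l" using assms prime_odd_int by blast
  hence "even ((l - 1) div 2 - (l - 1) div 2 div 2) \<longleftrightarrow> l mod 8 \<in> {1, 7}"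
    unfolding insert_iff empty_iff by presburger
  moreover have "(l - 1) div 2 - (l - 1) div 2 div 2 \<ge> 0" using assms by simp
  ultimately show ?thesis
    using gauss_lemma card_E_two assms by (simp add: minus_one_power_iff even_nat_iff)
qed

lemma Legendre_minus_two:
  fixes l :: int
  assumes "prime l" "l > 2"
  shows "Legendre (-2) l = (if l mod 8 \<in> {1, 3} then 1 else -1)"
proof -
  have "Legendre (-2) l = Legendre (-1) l * Legendre 2 l"
    using Legendre_mult[OF assms, of "-1" 2] by simp
  moreover have "odd l" using assms prime_odd_int by blast
  hence "l mod 8 \<in> {1, 3, 5, 7}" "l mod 4 = 1 \<longleftrightarrow> l mod 8 \<in> {1, 5}"
    unfolding insert_iff empty_iff by presburger+
  ultimately show ?thesis
    using Legendre_two[OF assms] Legendre_minus_one_mod_4[OF assms] by auto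
qed

definition pstar :: "int \<Rightarrow> int" where
  "pstar x = (if x mod 4 = 1 then x else -x)"

lemma Legendre_pstar:
  fixes x y :: int
  assumes x: "prime x" "x > 2" and y: "prime y" "y > 2" and "x \<noteq> y"
    and "Legendre y x = 1"
  shows "Legendre (pstar x) y = 1"
proof -
  have reciprocity: "Legendre x y * Legendre y x = (-1) ^ nat ((x - 1) div 2 * ((y - 1) div 2))"
    using Quadratic_Reciprocity_int[of x y] assms by simp
  have "odd x" "odd y" using x y prime_odd_int by blast+
  hence "even ((x - 1) div 2 * ((y - 1) div 2)) \<longleftrightarrow> x mod 4 = 1 \<or> y mod 4 = 1" by presburger
  moreover have "(x - 1) div 2 * ((y - 1) div 2) \<ge> 0" using x y by simp
  ultimately have "Legendre x y = (if x mod 4 = 1 \<or> y mod 4 = 1 then 1 else -1)"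
    using reciprocity assms by (simp add: minus_one_power_iff even_nat_iff)
  thus ?thesis
    unfolding pstar_def using Legendre_mult[OF y, of "-1" x] Legendre_minus_one_mod_4[OF y] by auto
qed

lemma prod_mod_in_submonoid:
  fixes f :: "'a \<Rightarrow> int" and m :: int
  assumes "finite S" "\<And>x. x \<in> S \<Longrightarrow> f x mod m \<in> M" "1 mod m \<in> M"
    and "\<And>a b. a \<in> M \<Longrightarrow> b \<in> M \<Longrightarrow> (a * b) mod m \<in> M"
  shows "(\<Prod>x\<in>S. f x) mod m \<in> M"
  using assms(1,2)
proof (induction S rule: finite_induct)
  case (insert x F)
  hence "(\<Prod>x\<in>insert x F. f x) mod m = ((f x mod m) * ((\<Prod>x\<in>F. f x) mod m)) mod m"
    by (simp add: mod_mult_eq)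
  thus ?case using insert assms(4) by auto
qed (use assms(3) in simp)

locale twin_primes_twist =
  fixes p q :: int and Ds :: "int set"
  assumes p: "prime p" "odd p" and q: "prime q" "odd q" and twin: "q - p = 2"
    and finite_Ds: "finite Ds" and prime_Ds: "\<forall>Di \<in> Ds. prime Di"
    and odd_D: "odd (\<Prod>Ds)"
begin

lemma p_gt_2: "p > 2"
  using p prime_ge_2_int[of p] by (cases "p = 2") auto

lemma q_gt_2: "q > 2"
  using twin p_gt_2 by simp

lemma Ds_memberD:
  assumes "x \<in> Ds"
  shows "prime x" "x > 2" "x dvd \<Prod>Ds"
proof -
  show x: "prime x" using assms prime_Ds by blast
  show dvd: "x dvd \<Prod>Ds" using dvd_prodI[OF finite_Ds assms, of id] by simp
  hence "odd x" using odd_D by (meson dvd_trans)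
  thus "x > 2" using x prime_ge_2_int[of x] by (cases "x = 2") auto
qed

lemma odd_prime_in_S:
  assumes "l \<in> {p, q} \<union> Ds"
  shows "prime l" "l > 2"
proof -
  consider "l = p" | "l = q" | "l \<in> Ds" using assms by blast
  hence "prime l \<and> l > 2" using p q p_gt_2 q_gt_2 Ds_memberD(1,2) by cases auto
  thus "prime l" "l > 2" by auto
qed

lemma prod_Ds_pos: "\<Prod>Ds > 0"
  using finite_Ds prime_Ds by (intro prod_pos) (auto dest: prime_gt_0_int)

lemma prime_dvd_prod_pstar_iff:
  assumes "A \<subseteq> Ds" "prime l"
  shows "l dvd (\<Prod>x\<in>A. pstar x) \<longleftrightarrow> l \<in> A"
proof -
  have "finite A" using assms finite_Ds finite_subset by blast
  hence "l dvd (\<Prod>x\<in>A. pstar x) \<longleftrightarrow> (\<exists>x\<in>A. l dvd pstar x)"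
    using prime_dvd_prod_iff assms(2) by blast
  also have "\<dots> \<longleftrightarrow> (\<exists>x\<in>A. l = x)"
  proof (intro bex_cong refl)
    fix x assume "x \<in> A"
    hence "prime x" using assms(1) Ds_memberD(1) by blast
    thus "l dvd pstar x \<longleftrightarrow> l = x"
      using assms(2) primes_dvd_imp_eq[of l x] unfolding pstar_def by auto
  qed
  finally show ?thesis by simp
qed

definition T :: "int set" where
  "T = {x \<in> Ds. Pi_minus p q Ds x = 0}"

lemma T_subset: "T \<subseteq> Ds"
  unfolding T_def by auto

lemma finite_T: "finite T"
  using T_subset finite_Ds finite_subset by blast

lemma Pi_minus_nonneg: "Pi_minus p q Ds x \<ge> 0"
  unfolding Pi_minus_def using Legendre_le_1 by (intro add_nonneg_nonneg sum_nonneg) (simp_all add: le_diff_eq)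

lemma T_memberD:
  assumes "x \<in> T"
  shows "Legendre p x = 1" "Legendre q x = 1" "\<And>y. y \<in> Ds - {x} \<Longrightarrow> Legendre y x = 1"
proof -
  have nonneg: "1 - Legendre a x \<ge> 0" for a using Legendre_le_1[of a x] by simp
  have "(1 - Legendre p x) + (1 - Legendre q x) + (\<Sum>y \<in> Ds - {x}. 1 - Legendre y x) = 0"
    using assms unfolding T_def Pi_minus_def by simp
  moreover have "(\<Sum>y \<in> Ds - {x}. 1 - Legendre y x) \<ge> 0" using nonneg by (intro sum_nonneg)
  ultimately have "1 - Legendre p x = 0" "1 - Legendre q x = 0"
    and sum0: "(\<Sum>y \<in> Ds - {x}. 1 - Legendre y x) = 0"
    using nonneg[of p] nonneg[of q] by linarith+
  thus "Legendre p x = 1" "Legendre q x = 1" by auto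
  show "Legendre y x = 1" if "y \<in> Ds - {x}" for y
    using that sum0 finite_Ds sum_nonneg_eq_0_iff[of "Ds - {x}" "\<lambda>y. 1 - Legendre y x"] nonneg by auto
qed

lemma rho_minus_eq_card_T: "rho_minus p q Ds = int (card T)"
proof -
  have "\<lfloor>1 / (1 + real_of_int (Pi_minus p q Ds x))\<rfloor> = (if Pi_minus p q Ds x = 0 then 1 else 0)" for x
  proof (cases "Pi_minus p q Ds x = 0")
    case False
    hence "real_of_int (Pi_minus p q Ds x) \<ge> 1" using Pi_minus_nonneg[of x] by linarith
    thus ?thesis using False by (simp add: floor_eq_iff field_simps)
  qed simp
  hence "rho_minus p q Ds = (\<Sum>x\<in>Ds. if Pi_minus p q Ds x = 0 then 1 else 0)"
    unfolding rho_minus_def by simp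
  also have "\<dots> = int (card T)"
    unfolding T_def using sum.inter_filter[OF finite_Ds, of "\<lambda>_. 1::int"] by simp
  finally show ?thesis .
qed

lemma Legendre_pstar_T:
  assumes "x \<in> T" "l \<in> {p, q} \<union> Ds" "l \<noteq> x"
  shows "Legendre (pstar x) l = 1"
proof -
  have "x \<in> Ds" using assms(1) T_subset by blast
  moreover have "Legendre l x = 1" using assms T_memberD by auto
  ultimately show ?thesis
    using Legendre_pstar[of x l] Ds_memberD odd_prime_in_S[OF assms(2)] assms(3) by auto
qed

lemma prod_pstar_mod:
  assumes "A \<subseteq> Ds" "\<And>x. x \<in> A \<Longrightarrow> pstar x mod m \<in> M" "1 mod m \<in> M"
    and "\<And>a b. a \<in> M \<Longrightarrow> b \<in> M \<Longrightarrow> (a * b) mod m \<in> M"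
  shows "(\<Prod>x\<in>A. pstar x) mod m \<in> M"
  using assms finite_Ds finite_subset by (intro prod_mod_in_submonoid) blast+

lemma prod_pstar_mod_4:
  assumes "A \<subseteq> Ds"
  shows "(\<Prod>x\<in>A. pstar x) mod 4 = 1"
proof -
  have "pstar x mod 4 = 1" if "x \<in> Ds" for x
  proof -
    have "odd x" using Ds_memberD[OF that] prime_odd_int by blast
    hence "x mod 4 = 1 \<or> - x mod 4 = 1" by presburger
    thus ?thesis unfolding pstar_def by auto
  qed
  thus ?thesis using prod_pstar_mod[OF assms, of 4 "{1}"] assms by auto
qed

lemma odd_prod_pstar:
  assumes "A \<subseteq> Ds"
  shows "odd (\<Prod>x\<in>A. pstar x)"
  using prime_dvd_prod_pstar_iff[OF assms, of 2] assms Ds_memberD(2) by force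

lemma squarefree_twist:
  assumes "A \<subseteq> Ds" "t \<in> {1, 2, -2}"
  shows "squarefree (t * (\<Prod>x\<in>A. pstar x))"
proof (rule squarefree_mult_coprime)
  show "squarefree (\<Prod>x\<in>A. pstar x)"
  proof (rule squarefree_prod_coprime)
    fix a b assume "a \<in> A" "b \<in> A" "a \<noteq> b"
    hence "coprime a b" using assms(1) Ds_memberD(1) by (intro primes_coprime) auto
    thus "coprime (pstar a) (pstar b)" unfolding pstar_def by auto
  next
    fix a assume "a \<in> A"
    hence "prime a" using assms(1) Ds_memberD(1) by blast
    thus "squarefree (pstar a)" unfolding pstar_def by (auto intro: squarefree_prime)
  qed
  have "squarefree (2::int)" by (rule squarefree_prime) simp
  thus "squarefree t" using assms(2) by auto
  have "coprime 2 (\<Prod>x\<in>A. pstar x)"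
    using odd_prod_pstar[OF assms(1)] prime_imp_coprime[of "2::int"] by auto
  thus "coprime t (\<Prod>x\<in>A. pstar x)" using assms(2) by auto
qed

lemma prime_dvd_twistD:
  assumes "A \<subseteq> Ds" "t \<in> {1, 2, -2}" "prime l" "l dvd t * (\<Prod>x\<in>A. pstar x)"
  shows "l \<in> {2} \<union> A"
proof -
  have "l dvd t \<or> l dvd (\<Prod>x\<in>A. pstar x)" using assms(3,4) prime_dvd_mult_iff by blast
  moreover have "l dvd t \<Longrightarrow> l = 2"
    using assms(2,3) primes_dvd_imp_eq[of l 2] by auto
  ultimately show ?thesis using prime_dvd_prod_pstar_iff[OF assms(1,3)] by blast
qed

lemma Cd_padic_point_unramified_twist:
  assumes "A \<subseteq> T" "l \<in> {p, q} \<union> Ds" "l \<notin> A" "Legendre t l = 1"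
  shows "Cd_padic_point l p q (\<Prod>Ds) (t * (\<Prod>x\<in>A. pstar x))"
proof -
  note l = odd_prime_in_S[OF assms(2)]
  have "finite A" using assms(1) finite_T finite_subset by blast
  hence "Legendre (\<Prod>x\<in>A. pstar x) l = 1"
    using Legendre_pstar_T assms(1-3) by (intro Legendre_prod_eq_1[OF l]) auto
  hence "Legendre (t * (\<Prod>x\<in>A. pstar x)) l = 1" using assms(4) Legendre_mult[OF l] by simp
  then obtain w where "[w^2 = t * (\<Prod>x\<in>A. pstar x)] (mod l)" "\<not> l dvd t * (\<Prod>x\<in>A. pstar x)"
    unfolding Legendre_eq_1_iff_QuadRes QuadRes_def by blast
  moreover have "\<not> l dvd 2" using l zdvd_imp_le[of l 2] by auto
  ultimately show ?thesis using Cd_padic_point_of_square l(1) by blast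
qed

lemma Cd_padic_point_ramified_twist:
  assumes "A \<subseteq> T" "l \<in> A" "Legendre t l = 1"
  shows "Cd_padic_point l p q (\<Prod>Ds) (t * (\<Prod>x\<in>A. pstar x))"
proof -
  have lT: "l \<in> T" and lD: "l \<in> Ds" using assms T_subset by auto
  note l = Ds_memberD(1,2)[OF lD]
  have "finite A" using assms(1) finite_T finite_subset by blast
  \<comment> \<open>pstar l = \<sigma> l, and -\<sigma> is a square mod l by the first supplementary law\<close>
  define \<sigma> where "\<sigma> = (if l mod 4 = 1 then 1 else -1::int)"
  define d1 where "d1 = t * \<sigma> * (\<Prod>x\<in>A - {l}. pstar x)"
  define D1 where "D1 = \<Prod>(Ds - {l})"
  have d: "t * (\<Prod>x\<in>A. pstar x) = l * d1"
    unfolding d1_def \<sigma>_def pstar_def using prod.remove[OF \<open>finite A\<close> assms(2), of pstar]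
    by (simp add: pstar_def ac_simps)
  have D: "\<Prod>Ds = l * D1" unfolding D1_def using prod.remove[OF finite_Ds lD, of id] by simp
  have "Legendre (-\<sigma>) l = 1"
    unfolding \<sigma>_def using Legendre_minus_one_mod_4[OF l] Legendre_one[OF l(1)] by auto
  moreover have "Legendre (\<Prod>x\<in>A - {l}. pstar x) l = 1"
    using \<open>finite A\<close> Legendre_pstar_T assms(1) lD by (intro Legendre_prod_eq_1[OF l]) auto
  moreover have "Legendre D1 l = 1"
    unfolding D1_def using finite_Ds T_memberD(3)[OF lT] by (intro Legendre_prod_eq_1[OF l]) auto
  moreover have "-(d1 * D1) = (-\<sigma>) * t * (\<Prod>x\<in>A - {l}. pstar x) * D1"
    unfolding d1_def by (simp add: ac_simps)
  hence "Legendre (-(d1 * D1)) l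
      = Legendre (-\<sigma>) l * Legendre t l * Legendre (\<Prod>x\<in>A - {l}. pstar x) l * Legendre D1 l"
    by (simp only: Legendre_mult[OF l])
  ultimately have "Legendre (-(d1 * D1)) l = 1" using assms(3) by simp
  then obtain e where e: "[e^2 = -(d1 * D1)] (mod l)" and "\<not> l dvd d1 * D1"
    unfolding Legendre_eq_1_iff_QuadRes QuadRes_def by auto
  hence "\<not> l dvd d1" "\<not> l dvd D1" by auto
  moreover obtain s where "[s^2 = p] (mod l)" "\<not> l dvd p"
    using T_memberD(1)[OF lT] unfolding Legendre_eq_1_iff_QuadRes QuadRes_def by blast
  moreover obtain r where "[r^2 = q] (mod l)" "\<not> l dvd q"
    using T_memberD(2)[OF lT] unfolding Legendre_eq_1_iff_QuadRes QuadRes_def by blast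
  moreover have "\<not> l dvd 2" using l zdvd_imp_le[of l 2] by auto
  moreover have "q = p + 2" using twin by simp
  ultimately show ?thesis using Cd_padic_point_ramified[OF l(1)] e unfolding d D by blast
qed

lemma twist_in_phi_selmer:
  assumes "A \<subseteq> T" "t \<in> {1, 2, -2}" "\<forall>l \<in> {p, q} \<union> Ds. Legendre t l = 1"
    and "Cd_padic_point 2 p q (\<Prod>Ds) (t * (\<Prod>x\<in>A. pstar x))"
  shows "t * (\<Prod>x\<in>A. pstar x) \<in> phi_selmer p q Ds"
proof -
  have AD: "A \<subseteq> Ds" using assms(1) T_subset by blast
  have "t * (\<Prod>x\<in>A. pstar x) \<noteq> 0" using odd_prod_pstar[OF AD] assms(2) by auto
  moreover have "Cd_real_point p q (\<Prod>Ds) (t * (\<Prod>x\<in>A. pstar x))"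
    using calculation prod_Ds_pos p_gt_2 q_gt_2 by (intro Cd_real_point) auto
  moreover have "Cd_padic_point l p q (\<Prod>Ds) (t * (\<Prod>x\<in>A. pstar x))"
    if l: "l \<in> {2, p, q} \<union> Ds" for l
  proof -
    consider "l = 2" | "l \<in> A" | "l \<in> {p, q} \<union> Ds" "l \<notin> A" using l by blast
    thus ?thesis
    proof cases
      case 2
      thus ?thesis using assms(1,3) AD Cd_padic_point_ramified_twist by blast
    next
      case 3
      thus ?thesis using assms(1,3) Cd_padic_point_unramified_twist by blast
    qed (use assms(4) in simp)
  qed
  ultimately show ?thesis
    unfolding phi_selmer_def using squarefree_twist[OF AD assms(2)] prime_dvd_twistD[OF AD assms(2)] AD
    by blast
qed

lemma p_plus_q_mod_4: "(p + q) mod 4 = 0"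
  using p(2) twin by presburger

lemma Cd_padic_point_2_twist:
  assumes "A \<subseteq> Ds"
  shows "Cd_padic_point 2 p q (\<Prod>Ds) (\<Prod>x\<in>A. pstar x)"
proof -
  define d where "d = (\<Prod>x\<in>A. pstar x)"
  define D where "D = \<Prod>Ds"
  have "d mod 4 = 1" unfolding d_def using prod_pstar_mod_4[OF assms] .
  hence "d mod 8 = 1 \<or> d mod 8 = 5" by presburger
  moreover have "odd d" using \<open>d mod 4 = 1\<close> by presburger
  ultimately consider j where "d = 8 * j + 1" | j where "d = 8 * j + 5"
    by (metis mult_div_mod_eq add.commute mult.commute)
  hence "Cd_padic_point 2 p q D d"
  proof cases
    case (1 j)
    \<comment> \<open>(u, z) = (1, 0): the right-hand side is d^2 and d \<equiv> 1 mod 8 is a 2-adic square\<close>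
    have "[d = d^2] (mod 8)" using 1 by (simp add: cong_iff_dvd_diff algebra_simps power2_eq_square)
    moreover have "Cd_rhs p q D d 1 0 = 1 * d^2" by (simp add: Cd_rhs_int)
    moreover have "padic_nonzero 2 (\<lambda>_. 1)" by (rule padic_nonzero_const) auto
    ultimately show ?thesis using Cd_padic_point_2_of_cong_mod_8[where v = 1 and M = 1 and z = 0] \<open>odd d\<close>
      by simp
  next
    case (2 j)
    \<comment> \<open>(u, z) = (2, 1): the right-hand side is 4(4d^2 + 2(p+q)Dd + D^2) with the bracket \<equiv> 5 mod 8\<close>
    obtain n where n: "D = 2 * n + 1" using odd_D unfolding D_def by (rule oddE)
    obtain w where w: "p + q = 4 * w" using p_plus_q_mod_4 by (metis dvd_def mod_0_imp_dvd)
    define c where "c = 4*d^2 + 2*(p+q)*D*d + D^2"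
    obtain u where u: "n * (n + 1) = 2 * u" by (metis dvd_def even_mult_iff odd_add odd_one)
    have "c - d = 8 * (32*j^2 + 39*j + 12 + w*D*d + u)"
    proof -
      have "c - d = 8 * (32*j^2 + 39*j + 12 + w*D*d) + 4 * (n * (n + 1))"
        unfolding c_def using 2 n w by (simp add: algebra_simps power2_eq_square)
      thus ?thesis using u by simp
    qed
    hence "[c = d] (mod 8)" by (simp add: cong_iff_dvd_diff)
    hence "[d = c] (mod 8)" by (rule cong_sym)
    moreover have "Cd_rhs p q D d 2 1 = 4 * c" unfolding c_def by (simp add: Cd_rhs_int algebra_simps)
    moreover have "padic_nonzero 2 (\<lambda>_. 2)" unfolding padic_nonzero_def by (rule exI[of _ 2]) simp
    ultimately show ?thesis using Cd_padic_point_2_of_cong_mod_8[where v = 2 and M = 4 and z = 1] \<open>odd d\<close>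
      by simp
  qed
  thus ?thesis unfolding d_def D_def .
qed

lemma Cd_padic_point_2_twist_two:
  assumes "A \<subseteq> Ds" "p mod 8 = 7" "\<forall>x\<in>Ds. x mod 8 \<in> {1, 7}"
  shows "Cd_padic_point 2 p q (\<Prod>Ds) (2 * (\<Prod>x\<in>A. pstar x))"
proof -
  define d where "d = (\<Prod>x\<in>A. pstar x)"
  define D where "D = \<Prod>Ds"
  have "pstar x mod 8 \<in> {1}" if "x \<in> A" for x
  proof -
    have "x mod 8 = 1 \<or> x mod 8 = 7" using assms(1,3) that by auto
    hence "x mod 4 = 1 \<and> x mod 8 = 1 \<or> x mod 4 \<noteq> 1 \<and> - x mod 8 = 1" by presburger
    thus ?thesis unfolding pstar_def by auto
  qed
  hence "d mod 8 = 1" unfolding d_def using prod_pstar_mod[OF assms(1), of 8 "{1}"] by auto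
  then obtain j where j: "d = 8 * j + 1" by (metis mult_div_mod_eq add.commute mult.commute)
  have "D mod 8 \<in> {1, 7}"
    unfolding D_def using assms(3) by (intro prod_mod_in_submonoid[OF finite_Ds, of id, simplified]) auto
  then obtain n D0 where n: "D = 8 * n + D0" "D0 \<in> {1, 7}" by (metis mult_div_mod_eq add.commute mult.commute)
  obtain k where "p = 8 * k + 7" using assms(2) by (metis mult_div_mod_eq add.commute mult.commute)
  hence w: "p + q = 16 * (k + 1)" using twin by simp
  define c where "c = d + 8 * (4*j^2 + (k+1)*D*d + 4*n^2 + n*D0 + (if D0 = 1 then 0 else 3))"
  have "Cd_rhs p q D (2 * d) 1 1 = 8 * c"
    unfolding c_def using j n w by (auto simp: Cd_rhs_int algebra_simps power2_eq_square)
  moreover have "[d = c] (mod 8)" unfolding c_def cong_iff_dvd_diff by simp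
  moreover have "padic_nonzero 2 (\<lambda>_. 1)" by (rule padic_nonzero_const) auto
  moreover have "odd d" using j by simp
  ultimately have "Cd_padic_point 2 p q D (2 * d)"
    using Cd_padic_point_2_of_cong_mod_8[where v = 2 and M = 8 and z = 1] by simp
  thus ?thesis unfolding d_def D_def .
qed

lemma Cd_padic_point_2_twist_minus_two:
  assumes "A \<subseteq> Ds" "p mod 8 = 1" "\<forall>x\<in>Ds. x mod 8 \<in> {1, 3}"
  shows "Cd_padic_point 2 p q (\<Prod>Ds) (-2 * (\<Prod>x\<in>A. pstar x))"
proof -
  define d where "d = (\<Prod>x\<in>A. pstar x)"
  define D where "D = \<Prod>Ds"
  have "d mod 4 = 1" unfolding d_def using prod_pstar_mod_4[OF assms(1)] .
  then obtain j where j: "d = 4 * j + 1" by (metis mult_div_mod_eq add.commute mult.commute)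
  have "D mod 8 \<in> {1, 3}"
    unfolding D_def using assms(3) by (intro prod_mod_in_submonoid[OF finite_Ds, of id, simplified]) auto
  then obtain n D0 where n: "D = 8 * n + D0" "D0 \<in> {1, 3}" by (metis mult_div_mod_eq add.commute mult.commute)
  obtain k where "p = 8 * k + 1" using assms(2) by (metis mult_div_mod_eq add.commute mult.commute)
  hence w: "p + q = 16 * k + 4" using twin by simp
  define c where "c = -d + 8 * (j^2 + j - k*(8*n + D0)*(4*j + 1) - (8*n*j + 2*n + D0*j) + 4*n^2 + n*D0)"
  have "Cd_rhs p q D (-2 * d) 1 1 = 8 * c"
    unfolding c_def using j n w by (auto simp: Cd_rhs_int algebra_simps power2_eq_square)
  moreover have "[-d = c] (mod 8)" unfolding c_def cong_iff_dvd_diff by simp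
  moreover have "padic_nonzero 2 (\<lambda>_. 1)" by (rule padic_nonzero_const) auto
  moreover have "odd (-d)" using j by simp
  ultimately have "Cd_padic_point 2 p q D (-2 * d)"
    using Cd_padic_point_2_of_cong_mod_8[where a = "-d" and v = 2 and M = 8 and z = 1] by simp
  thus ?thesis unfolding d_def D_def .
qed

lemma finite_phi_selmer: "finite (phi_selmer p q Ds)"
proof -
  define M where "M = 2 * p * q * \<Prod>Ds"
  have M: "M \<noteq> 0" unfolding M_def using p_gt_2 q_gt_2 prod_Ds_pos by simp
  have "d dvd M" if "d \<in> phi_selmer p q Ds" for d
  proof -
    have d: "d \<noteq> 0" "squarefree d" "\<forall>l. prime l \<and> l dvd d \<longrightarrow> l \<in> {2, p, q} \<union> Ds"
      using that unfolding phi_selmer_def by auto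
    show ?thesis
    proof (rule multiplicity_le_imp_dvd[OF d(1)])
      fix l :: int assume l: "prime l"
      show "multiplicity l d \<le> multiplicity l M"
      proof (cases "l dvd d")
        case True
        hence "l \<in> {2, p, q} \<union> Ds" using d(3) l by blast
        hence "l dvd M" unfolding M_def using Ds_memberD(3) by (auto intro: dvd_mult)
        hence "multiplicity l M \<ge> 1" using prime_multiplicity_gt_zero_iff[OF prime_imp_prime_elem[OF l] M] by linarith
        moreover have "multiplicity l d \<le> 1" using d(1,2) l squarefree_factorial_semiring'' by blast
        ultimately show ?thesis by simp
      qed (simp add: not_dvd_imp_multiplicity_0)
    qed
  qed
  hence "\<bar>d\<bar> \<le> \<bar>M\<bar>" if "d \<in> phi_selmer p q Ds" for d using that M dvd_imp_le_int by blast
  hence "phi_selmer p q Ds \<subseteq> {-\<bar>M\<bar>..\<bar>M\<bar>}" by fastforce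
  thus ?thesis using finite_subset by blast
qed

lemma inj_on_twist:
  assumes "t \<noteq> 0"
  shows "inj_on (\<lambda>A. t * (\<Prod>x\<in>A. pstar x)) (Pow Ds)"
proof
  fix A B assume "A \<in> Pow Ds" "B \<in> Pow Ds" "t * (\<Prod>x\<in>A. pstar x) = t * (\<Prod>x\<in>B. pstar x)"
  hence eq: "(\<Prod>x\<in>A. pstar x) = (\<Prod>x\<in>B. pstar x)" using assms by simp
  have "l \<in> A \<longleftrightarrow> l \<in> B" if "l \<in> Ds" for l
    using prime_dvd_prod_pstar_iff[of A l] prime_dvd_prod_pstar_iff[of B l] Ds_memberD(1)[OF that]
      \<open>A \<in> Pow Ds\<close> \<open>B \<in> Pow Ds\<close> eq by simp
  thus "A = B" using \<open>A \<in> Pow Ds\<close> \<open>B \<in> Pow Ds\<close> by blast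
qed

lemma card_twists:
  assumes "t \<noteq> 0"
  shows "card ((\<lambda>A. t * (\<Prod>x\<in>A. pstar x)) ` Pow T) = 2 ^ card T"
proof -
  have "inj_on (\<lambda>A. t * (\<Prod>x\<in>A. pstar x)) (Pow T)"
    using inj_on_subset[OF inj_on_twist[OF assms]] T_subset by blast
  hence "card ((\<lambda>A. t * (\<Prod>x\<in>A. pstar x)) ` Pow T) = card (Pow T)" by (rule card_image)
  thus ?thesis using card_Pow finite_T by simp
qed

lemma card_phi_selmer_ge:
  assumes "\<forall>A \<subseteq> T. (\<Prod>x\<in>A. pstar x) \<in> phi_selmer p q Ds"
  shows "2 ^ card T \<le> card (phi_selmer p q Ds)"
proof -
  have "2 ^ card T = card ((\<lambda>A. 1 * (\<Prod>x\<in>A. pstar x)) ` Pow T)" using card_twists[of 1] by simp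
  also have "\<dots> \<le> card (phi_selmer p q Ds)"
    using assms by (intro card_mono[OF finite_phi_selmer]) auto
  finally show ?thesis .
qed

lemma card_phi_selmer_ge_Suc:
  assumes "t \<in> {2, -2}"
    and "\<forall>A \<subseteq> T. (\<Prod>x\<in>A. pstar x) \<in> phi_selmer p q Ds \<and> t * (\<Prod>x\<in>A. pstar x) \<in> phi_selmer p q Ds"
  shows "2 ^ (card T + 1) \<le> card (phi_selmer p q Ds)"
proof -
  define S1 where "S1 = (\<lambda>A. 1 * (\<Prod>x\<in>A. pstar x)) ` Pow T"
  define S2 where "S2 = (\<lambda>A. t * (\<Prod>x\<in>A. pstar x)) ` Pow T"
  have "(\<Prod>x\<in>A. pstar x) \<noteq> t * (\<Prod>x\<in>B. pstar x)" if "A \<subseteq> T" for A B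
  proof -
    have "odd (\<Prod>x\<in>A. pstar x)" using odd_prod_pstar that T_subset by blast
    moreover have "even (t * (\<Prod>x\<in>B. pstar x))" using assms(1) by auto
    ultimately show ?thesis by metis
  qed
  hence "S1 \<inter> S2 = {}" unfolding S1_def S2_def by auto
  moreover have "card S1 = 2 ^ card T" "card S2 = 2 ^ card T"
    unfolding S1_def S2_def using card_twists[of 1] card_twists[of t] assms(1) by auto
  moreover have "finite S1" "finite S2" unfolding S1_def S2_def using finite_T by simp_all
  ultimately have "2 ^ (card T + 1) = card (S1 \<union> S2)" by (simp add: card_Un_disjoint)
  also have "\<dots> \<le> card (phi_selmer p q Ds)"
    using assms(2) finite_phi_selmer unfolding S1_def S2_def by (intro card_mono) auto
  finally show ?thesis .
qed

lemma twist_by_one_in_phi_selmer: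
  assumes "A \<subseteq> T"
  shows "(\<Prod>x\<in>A. pstar x) \<in> phi_selmer p q Ds"
proof -
  have "\<forall>l \<in> {p, q} \<union> Ds. Legendre 1 l = 1" using Legendre_one odd_prime_in_S(1) by blast
  moreover have "Cd_padic_point 2 p q (\<Prod>Ds) (1 * (\<Prod>x\<in>A. pstar x))"
    using Cd_padic_point_2_twist assms T_subset by simp
  ultimately show ?thesis using twist_in_phi_selmer[OF assms, of 1] by simp
qed

lemma twist_by_two_in_phi_selmer:
  assumes "(p mod 8 = 7 \<and> (\<forall>x\<in>Ds. x mod 8 \<in> {1, 7})) \<or> (p mod 8 = 1 \<and> (\<forall>x\<in>Ds. x mod 8 \<in> {1, 3}))"
  shows "\<exists>t \<in> {2, -2}. \<forall>A \<subseteq> T. t * (\<Prod>x\<in>A. pstar x) \<in> phi_selmer p q Ds"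
  using assms
proof
  assume a: "p mod 8 = 7 \<and> (\<forall>x\<in>Ds. x mod 8 \<in> {1, 7})"
  have "q mod 8 = 1" using conjunct1[OF a] twin by presburger
  hence "\<forall>l \<in> {p, q} \<union> Ds. Legendre 2 l = 1"
    using a Legendre_two odd_prime_in_S by auto
  moreover have "Cd_padic_point 2 p q (\<Prod>Ds) (2 * (\<Prod>x\<in>A. pstar x))" if "A \<subseteq> T" for A
    using Cd_padic_point_2_twist_two a that T_subset by blast
  ultimately show ?thesis using twist_in_phi_selmer[where t = 2] by auto
next
  assume b: "p mod 8 = 1 \<and> (\<forall>x\<in>Ds. x mod 8 \<in> {1, 3})"
  have "q mod 8 = 3" using conjunct1[OF b] twin by presburger
  hence "\<forall>l \<in> {p, q} \<union> Ds. Legendre (-2) l = 1"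
    using b Legendre_minus_two odd_prime_in_S by auto
  moreover have "Cd_padic_point 2 p q (\<Prod>Ds) (-2 * (\<Prod>x\<in>A. pstar x))" if "A \<subseteq> T" for A
    using Cd_padic_point_2_twist_minus_two b that T_subset by blast
  ultimately have "\<forall>A \<subseteq> T. -2 * (\<Prod>x\<in>A. pstar x) \<in> phi_selmer p q Ds"
    using twist_in_phi_selmer[where t = "-2"] by (simp only: insert_iff) blast
  thus ?thesis by blast
qed

end

theorem theorem1p6:
  fixes p q :: int and Ds :: "int set"
  assumes "prime p" and "prime q" and "odd p" and "odd q" and "q - p = 2"
    and "finite Ds" and "\<forall>Di \<in> Ds. prime Di"
    and "odd (\<Prod>Ds)" and "\<not> p dvd (\<Prod>Ds)" and "\<not> q dvd (\<Prod>Ds)"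
  shows
    "((\<exists>T s. T \<subseteq> Ds \<and> int (card T) = rho_minus p q Ds \<and> (\<forall>x\<in>T. s x \<in> {x, - x}) \<and>
        (\<forall>A \<subseteq> T. (\<Prod>x\<in>A. s x) \<in> phi_selmer p q Ds)) \<and>
      2 ^ nat (rho_minus p q Ds) \<le> card (phi_selmer p q Ds))
   \<and>
    (((p mod 8 = 7 \<and> (\<forall>Di\<in>Ds. Di mod 8 \<in> {1, 7})) \<or>
      (p mod 8 = 1 \<and> (\<forall>Di\<in>Ds. Di mod 8 \<in> {1, 3}))) \<longrightarrow>
     (\<exists>T s t. T \<subseteq> Ds \<and> int (card T) = rho_minus p q Ds \<and> (\<forall>x\<in>T. s x \<in> {x, - x}) \<and>
        t \<in> {2, -2} \<and>
        (\<forall>A \<subseteq> T. (\<Prod>x\<in>A. s x) \<in> phi_selmer p q Ds \<and>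
                   t * (\<Prod>x\<in>A. s x) \<in> phi_selmer p q Ds)) \<and>
     2 ^ (nat (rho_minus p q Ds) + 1) \<le> card (phi_selmer p q Ds))"
proof -
  interpret twin_primes_twist p q Ds using assms by unfold_locales
  have pstar: "\<forall>x\<in>T. pstar x \<in> {x, - x}" unfolding pstar_def by auto
  note rho = rho_minus_eq_card_T and one = twist_by_one_in_phi_selmer
  have part1: "\<forall>A \<subseteq> T. (\<Prod>x\<in>A. pstar x) \<in> phi_selmer p q Ds" using one by blast
  show ?thesis
  proof (intro conjI impI)
    show "\<exists>T s. T \<subseteq> Ds \<and> int (card T) = rho_minus p q Ds \<and> (\<forall>x\<in>T. s x \<in> {x, - x}) \<and>
        (\<forall>A \<subseteq> T. (\<Prod>x\<in>A. s x) \<in> phi_selmer p q Ds)"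
      using T_subset rho pstar part1 by (intro exI[of _ T] exI[of _ pstar]) simp
    show "2 ^ nat (rho_minus p q Ds) \<le> card (phi_selmer p q Ds)"
      using card_phi_selmer_ge[OF part1] rho by simp
  next
    assume "(p mod 8 = 7 \<and> (\<forall>Di\<in>Ds. Di mod 8 \<in> {1, 7})) \<or> (p mod 8 = 1 \<and> (\<forall>Di\<in>Ds. Di mod 8 \<in> {1, 3}))"
    then obtain t where t: "t \<in> {2, -2}"
      and two: "\<forall>A \<subseteq> T. t * (\<Prod>x\<in>A. pstar x) \<in> phi_selmer p q Ds"
      using twist_by_two_in_phi_selmer by blast
    have part2: "\<forall>A \<subseteq> T. (\<Prod>x\<in>A. pstar x) \<in> phi_selmer p q Ds \<and> t * (\<Prod>x\<in>A. pstar x) \<in> phi_selmer p q Ds"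
      using one two by blast
    show "\<exists>T s t. T \<subseteq> Ds \<and> int (card T) = rho_minus p q Ds \<and> (\<forall>x\<in>T. s x \<in> {x, - x}) \<and> t \<in> {2, -2} \<and>
        (\<forall>A \<subseteq> T. (\<Prod>x\<in>A. s x) \<in> phi_selmer p q Ds \<and> t * (\<Prod>x\<in>A. s x) \<in> phi_selmer p q Ds)"
      using T_subset rho pstar t part2 by (intro exI[of _ T] exI[of _ pstar] exI[of _ t]) simp
    show "2 ^ (nat (rho_minus p q Ds) + 1) \<le> card (phi_selmer p q Ds)"
      using card_phi_selmer_ge_Suc[OF t part2] rho by simp
  qed
qed

end
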